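(* For every $p>1$, the function $t\mapsto\dot H_e(t/p)/\dot H_e(t)$ is increasing on $(0,\ln2)$.
   Context: $\dot H_e(t)=te^{-t}-(1-e^{-t})\ln(1-e^{-t})$ for $t>0$. *)

theory Defs
  imports "HOL-Analysis.Analysis"
begin

text \<open>The derivative of the entropy-type function H_e, given explicitly for t > 0.\<close>
definition Hedot :: "real \<Rightarrow> real" where
  "Hedot t = t * exp (- t) - (1 - exp (- t)) * ln (1 - exp (- t))"

end

theory Submission
  imports Defs
begin

text \<open>
  For a positive differentiable f, the log-derivative of f(t/p)/f(t) is
  (g(t/p) - g(t))/t with g(t) = t f'(t)/f(t) the elasticity of f; so the ratio
  increases as soon as g decreases. For f = Hedot the substitution x = e^t - 1 turns
  the elasticity into 1/k(x) with k(x) = (1+x)/(-ln x) + x/ln(1+x), and on (0,1),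
  i.e. for t < ln 2, both summands of k increase: the first because -ln x decreases,
  the second by concavity of ln(1+x).
\<close>

lemma strict_mono_on_dilation_ratio:
  fixes f f' :: "real \<Rightarrow> real" and c p :: real
  assumes deriv: "\<And>t. 0 < t \<Longrightarrow> t < c \<Longrightarrow> (f has_real_derivative f' t) (at t)"
    and pos: "\<And>t. 0 < t \<Longrightarrow> t < c \<Longrightarrow> 0 < f t"
    and elasticity_anti: "strict_antimono_on {0<..<c} (\<lambda>t. t * f' t / f t)"
    and "1 < p"
  shows "strict_mono_on {0<..<c} (\<lambda>t. f (t / p) / f t)"
proof (rule strict_mono_onI)
  fix s t :: real
  assume s: "s \<in> {0<..<c}" and t: "t \<in> {0<..<c}" and "s < t"
  show "f (s / p) / f s < f (t / p) / f t"
  proof (rule DERIV_pos_imp_increasing[OF \<open>s < t\<close>])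
    fix r assume "s \<le> r" "r \<le> t"
    with s t have r: "0 < r" "r < c" by auto
    define q where "q = r / p"
    have q: "0 < q" "q < r" using r \<open>1 < p\<close> by (auto simp: q_def divide_simps)
    have "((\<lambda>r. r / p) has_real_derivative 1 / p) (at r)"
      using \<open>1 < p\<close> by (auto intro!: derivative_eq_intros)
    moreover have "(f has_real_derivative f' q) (at (r / p))"
      using deriv q r by (simp add: q_def)
    ultimately have fq: "((\<lambda>r. f (r / p)) has_real_derivative f' q / p) (at r)"
      using DERIV_chain2 by fastforce
    have f: "0 < f q" "0 < f r" using pos q r by auto
    have "r * f' r / f r < q * f' q / f q"
      using monotone_onD[OF elasticity_anti] q r by auto
    then have "0 < (q * f' q / f q - r * f' r / f r) * (f q * f r / r)"
      using f r by (intro mult_pos_pos) auto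
    also have "\<dots> = f' q / p * f r - f q * f' r"
      using f r \<open>1 < p\<close> by (simp add: q_def field_simps)
    finally have "0 < (f' q / p * f r - f q * f' r) / (f r * f r)"
      using f by simp
    moreover have "((\<lambda>r. f (r / p) / f r) has_real_derivative
        (f' q / p * f r - f q * f' r) / (f r * f r)) (at r)"
      using DERIV_divide[OF fq deriv[OF r]] f by (simp add: q_def)
    ultimately show "\<exists>y. ((\<lambda>r. f (r / p) / f r) has_real_derivative y) (at r) \<and> 0 < y"
      by blast
  qed
qed

lemma mult_ln_one_plus_le:
  fixes x y :: real
  assumes "0 < x" "x < y"
  shows "x * ln (1 + y) \<le> y * ln (1 + x)"
proof -
  define u where "u = x / y"
  have u: "0 \<le> u" "u \<le> 1" using assms by (auto simp: u_def)
  have "(1 - u) *\<^sub>R 1 + u *\<^sub>R (1 + y) = 1 + x"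
    using assms by (simp add: u_def field_simps)
  moreover have "u * ln (1 + y) \<le> ln ((1 - u) *\<^sub>R 1 + u *\<^sub>R (1 + y))"
    using concave_onD[OF ln_concave u, of 1 "1 + y"] assms by simp
  ultimately have "u * ln (1 + y) \<le> ln (1 + x)" by (simp only:)
  then have "y * (u * ln (1 + y)) \<le> y * ln (1 + x)"
    using assms by (intro mult_left_mono) auto
  then show ?thesis using assms by (simp add: u_def)
qed

lemma strict_mono_on_ln_ratio_sum:
  "strict_mono_on {0<..<1} (\<lambda>x::real. (1 + x) / (- ln x) + x / ln (1 + x))"
proof (rule strict_mono_onI)
  fix x y :: real
  assume "x \<in> {0<..<1}" "y \<in> {0<..<1}" "x < y"
  then have xy: "0 < x" "x < y" "y < 1" by auto
  have "(1 + x) / (- ln x) < (1 + x) / (- ln y)"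
    using xy by (intro divide_strict_left_mono) (auto intro: mult_neg_neg)
  also have "\<dots> \<le> (1 + y) / (- ln y)"
    using xy by (intro divide_right_mono) auto
  finally have "(1 + x) / (- ln x) < (1 + y) / (- ln y)" .
  moreover have "x / ln (1 + x) \<le> y / ln (1 + y)"
    using mult_ln_one_plus_le[OF xy(1,2)] xy by (simp add: divide_simps)
  ultimately show "(1 + x) / (- ln x) + x / ln (1 + x) < (1 + y) / (- ln y) + y / ln (1 + y)"
    by linarith
qed

definition Hddot :: "real \<Rightarrow> real" where
  "Hddot t = - exp (- t) * (t + ln (1 - exp (- t)))"

lemma Hedot_has_real_derivative:
  fixes t :: real
  assumes "0 < t"
  shows "(Hedot has_real_derivative Hddot t) (at t)"
proof -
  have e: "exp (- t) < 1" using assms by simp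
  have "(Hedot has_real_derivative
     exp (- t) - t * exp (- t) - (exp (- t) * ln (1 - exp (- t))
       + (1 - exp (- t)) * (exp (- t) / (1 - exp (- t))))) (at t)"
    unfolding Hedot_def[abs_def] using e by (auto intro!: derivative_eq_intros)
  moreover have "exp (- t) - t * exp (- t) - (exp (- t) * ln (1 - exp (- t))
       + (1 - exp (- t)) * (exp (- t) / (1 - exp (- t)))) = Hddot t"
    using e by (simp add: Hddot_def field_simps)
  ultimately show ?thesis by simp
qed

lemma Hedot_pos:
  fixes t :: real
  assumes "0 < t"
  shows "0 < Hedot t"
proof -
  have "0 < 1 - exp (- t)" "1 - exp (- t) < 1" using assms by auto
  then have "(1 - exp (- t)) * ln (1 - exp (- t)) < 0"
    by (intro mult_pos_neg) auto
  moreover have "0 < t * exp (- t)" using assms by simp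
  ultimately show ?thesis by (simp add: Hedot_def)
qed

lemma
  fixes x :: real
  assumes "0 < x"
  shows Hedot_ln_one_plus: "Hedot (ln (1 + x)) = ((1 + x) * ln (1 + x) - x * ln x) / (1 + x)"
    and Hddot_ln_one_plus: "Hddot (ln (1 + x)) = - ln x / (1 + x)"
proof -
  have e: "exp (- ln (1 + x)) = 1 / (1 + x)"
    using assms by (simp add: exp_minus inverse_eq_divide)
  have u: "1 - 1 / (1 + x) = x / (1 + x)" using assms by (simp add: field_simps)
  have lu: "ln (x / (1 + x)) = ln x - ln (1 + x)" using assms by (simp add: ln_div)
  have "Hedot (ln (1 + x)) = ln (1 + x) * (1 / (1 + x)) - x / (1 + x) * (ln x - ln (1 + x))"
    unfolding Hedot_def e u lu ..
  also have "\<dots> = (ln (1 + x) - x * (ln x - ln (1 + x))) / (1 + x)"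
    by (simp add: diff_divide_distrib)
  also have "ln (1 + x) - x * (ln x - ln (1 + x)) = (1 + x) * ln (1 + x) - x * ln x"
    by (simp add: algebra_simps)
  finally show "Hedot (ln (1 + x)) = ((1 + x) * ln (1 + x) - x * ln x) / (1 + x)" .
  show "Hddot (ln (1 + x)) = - ln x / (1 + x)"
    unfolding Hddot_def e u lu by simp
qed

lemma Hedot_elasticity_ln_one_plus:
  fixes x :: real
  assumes "0 < x" "x < 1"
  shows "ln (1 + x) * Hddot (ln (1 + x)) / Hedot (ln (1 + x))
    = 1 / ((1 + x) / (- ln x) + x / ln (1 + x))"
proof -
  have "a * (b / (1 + x)) / (((1 + x) * a + x * b) / (1 + x)) = 1 / ((1 + x) / b + x / a)"
    if "0 < a" "0 < b" for a b :: real
  proof -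
    have "0 < (1 + x) * a + x * b" using that assms by (intro add_pos_pos mult_pos_pos) auto
    have "a * (b / (1 + x)) / (((1 + x) * a + x * b) / (1 + x)) = a * b / ((1 + x) * a + x * b)"
      using assms by (simp add: divide_simps)
    also have "\<dots> = 1 / ((1 + x) / b + x / a)"
      using that \<open>0 < (1 + x) * a + x * b\<close> by (simp add: field_simps)
    finally show ?thesis .
  qed
  from this[of "ln (1 + x)" "- ln x"] show ?thesis
    using assms by (simp add: Hedot_ln_one_plus Hddot_ln_one_plus)
qed

lemma strict_antimono_on_Hedot_elasticity:
  "strict_antimono_on {0<..<ln 2} (\<lambda>t. t * Hddot t / Hedot t)"
proof (rule monotone_onI)
  fix s t :: real
  assume "s \<in> {0<..<ln 2}" "t \<in> {0<..<ln 2}" "s < t"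
  define x y where "x = exp s - 1" and "y = exp t - 1"
  have st: "s = ln (1 + x)" "t = ln (1 + y)" by (simp_all add: x_def y_def)
  have "exp t < exp (ln 2)" using \<open>t \<in> _\<close> by (intro exp_less_mono) auto
  then have xy: "0 < x" "x < y" "y < 1"
    using \<open>s \<in> _\<close> \<open>s < t\<close> by (auto simp: x_def y_def)
  define k where "k z = (1 + z) / (- ln z) + z / ln (1 + z)" for z :: real
  have "0 < (1 + x) / (- ln x)" "0 < x / ln (1 + x)" using xy by (auto simp: divide_less_0_iff)
  then have "0 < k x" by (simp add: k_def)
  moreover have "k x < k y"
    using monotone_onD[OF strict_mono_on_ln_ratio_sum] xy by (auto simp: k_def)
  ultimately have "1 / k y < 1 / k x" by (simp add: frac_less2)
  then show "t * Hddot t / Hedot t < s * Hddot s / Hedot s"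
    using Hedot_elasticity_ln_one_plus[of x] Hedot_elasticity_ln_one_plus[of y] xy
    by (simp add: st k_def)
qed

theorem mainTheorem18:
  fixes p :: real
  assumes "p > 1"
  shows "strict_mono_on {0<..<ln 2} (\<lambda>t. Hedot (t / p) / Hedot t)"
  using strict_mono_on_dilation_ratio[OF Hedot_has_real_derivative Hedot_pos
      strict_antimono_on_Hedot_elasticity assms]
  by blast

end
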